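(* Consider the local public good game described in the context and suppose Assumption 1 holds. Let $(x^*,y^*,g^* )$ be a Nash equilibrium and suppose there are players $i,j\in N$ with $x_i^*>k$ and $x_j^*>k$. Then $g_{ij}^*=1$.
   Context: There is a finite set of players $N=\{1,\dots,n\}$. Each player $i$ chooses a public good provision $x_i\ge 0$, a private good consumption $y_i\ge 0$, and links $g_i=(g_{i1},\dots,g_{in})\in\{0,1\}^n$ with $g_{ii}=0$; $g_{ij}=1$ means $i$ links to $j$. Let $N_i(g)=\{j:g_{ij}=1\}$ and $\eta_i(g)=|N_i(g)|$. Each link costs its sponsor $k>0$. Player $i$'s spillovers are $\bar x_{-i}=\sum_{j}g_{ij}x_j$ and her public good consumption is $\bar x_i=x_i+\bar x_{-i}$. Player $i$ maximizes $U_i(\bar x_i,y_i)$ subject to $x_i+p_iy_i+\eta_i(g)k=w_i$, where $w_i>0$, $p_i>0$, and $U_i$ is twice continuously differentiable, strictly concave and increasing in both arguments. The Engel curve $\gamma_i:\mathbb{R}\to\mathbb{R}$ gives, for income $W$, the public good consumption $\bar x$ maximizing $U_i(\bar x,y)$ subject to $\bar x+p_iy=W$; with net social income $\bar w_i(g)=w_i-\eta_i(g)k+\bar x_{-i}$, player $i$'s optimal provision is $x_i=\max\{\gamma_i(\bar w_i(g))-\bar x_{-i},0\}$. Assumption 1: for each $i$, $\gamma_i$ is continuously differentiable with $\gamma_i'(W)\in[0,1]$ for all $W$. A strategy profile $(x^*,y^*,g^* )$ is a Nash equilibrium if each player's strategy $(x_i^*,y_i^*,g_i^* )$ solves her maximization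 problem given the others' strategies. *)

theory Defs
  imports "HOL-Analysis.Analysis"
begin

text \<open>Utilities U i are functions of (public good consumption, private good consumption).
  Links: g i j = True means player i sponsors a link to player j.\<close>

definition strictly_concave :: "(real \<times> real \<Rightarrow> real) \<Rightarrow> bool" where
  "strictly_concave f \<longleftrightarrow>
     (\<forall>a b t. a \<noteq> b \<and> 0 < t \<and> t < 1 \<longrightarrow>
        f ((1 - t) *\<^sub>R a + t *\<^sub>R b) > (1 - t) * f a + t * f b)"

definition twice_cont_diff :: "(real \<times> real \<Rightarrow> real) \<Rightarrow> bool" where
  "twice_cont_diff f \<longleftrightarrow>
     (\<exists>(f' :: real \<times> real \<Rightarrow> ((real \<times> real) \<Rightarrow>\<^sub>L real))
       (f'' :: real \<times> real \<Rightarrow> ((real \<times> real) \<Rightarrow>\<^sub>L ((real \<times> real) \<Rightarrow>\<^sub>L real))).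
        (\<forall>z. (f has_derivative blinfun_apply (f' z)) (at z)) \<and>
        (\<forall>z. (f' has_derivative blinfun_apply (f'' z)) (at z)) \<and>
        continuous_on UNIV f'')"

definition increasing_both :: "(real \<times> real \<Rightarrow> real) \<Rightarrow> bool" where
  "increasing_both f \<longleftrightarrow>
     (\<forall>a a' b. a < a' \<longrightarrow> f (a, b) < f (a', b)) \<and>
     (\<forall>a b b'. b < b' \<longrightarrow> f (a, b) < f (a, b'))"

definition engel_curve :: "(real \<times> real \<Rightarrow> real) \<Rightarrow> real \<Rightarrow> (real \<Rightarrow> real) \<Rightarrow> bool" where
  "engel_curve u p gamma \<longleftrightarrow>
     (\<forall>W xb y. xb + p * y = W \<longrightarrow> u (xb, y) \<le> u (gamma W, (W - gamma W) / p))"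

definition assumption1 :: "(real \<Rightarrow> real) \<Rightarrow> bool" where
  "assumption1 gamma \<longleftrightarrow>
     (\<exists>gamma'. (\<forall>W. (gamma has_real_derivative gamma' W) (at W)) \<and>
               continuous_on UNIV gamma' \<and>
               (\<forall>W. 0 \<le> gamma' W \<and> gamma' W \<le> 1))"

definition eta :: "('n::finite \<Rightarrow> bool) \<Rightarrow> nat" where
  "eta gi = card {j. gi j}"

definition spill :: "('n::finite \<Rightarrow> bool) \<Rightarrow> ('n \<Rightarrow> real) \<Rightarrow> real" where
  "spill gi x = (\<Sum>j\<in>{j. gi j}. x j)"

definition feasible ::
  "('n::finite \<Rightarrow> real) \<Rightarrow> ('n \<Rightarrow> real) \<Rightarrow> real \<Rightarrow> 'n \<Rightarrow> real \<Rightarrow> real \<Rightarrow> ('n \<Rightarrow> bool) \<Rightarrow> bool" where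
  "feasible p w k i xi yi gi \<longleftrightarrow>
     xi \<ge> 0 \<and> yi \<ge> 0 \<and> \<not> gi i \<and> xi + p i * yi + real (eta gi) * k = w i"

definition nash_eq ::
  "('n::finite \<Rightarrow> real \<times> real \<Rightarrow> real) \<Rightarrow> ('n \<Rightarrow> real) \<Rightarrow> ('n \<Rightarrow> real) \<Rightarrow> real \<Rightarrow>
   ('n \<Rightarrow> real) \<Rightarrow> ('n \<Rightarrow> real) \<Rightarrow> ('n \<Rightarrow> 'n \<Rightarrow> bool) \<Rightarrow> bool" where
  "nash_eq U p w k x y g \<longleftrightarrow>
     (\<forall>i. feasible p w k i (x i) (y i) (g i) \<and>
        (\<forall>xi yi gi. feasible p w k i xi yi gi \<longrightarrow>
           U i (xi + spill gi x, yi) \<le> U i (x i + spill (g i) x, y i)))"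

end

theory Submission
  imports Defs
begin

(* If i does not link to j, she can sponsor the link and pay for it by cutting her own
   provision by k, which is feasible since x_i > k. Her private consumption is unchanged
   and her public good consumption rises by x_j - k > 0, so by monotonicity of U_i the
   deviation is profitable. *)

lemma eta_add_link:
  assumes "\<not> gi j"
  shows "eta (gi(j := True)) = Suc (eta gi)"
proof -
  have "Collect (gi(j := True)) = insert j (Collect gi)" by auto
  then show ?thesis unfolding eta_def using assms by simp
qed

lemma spill_add_link:
  assumes "\<not> gi j"
  shows "spill (gi(j := True)) x = spill gi x + x j"
proof -
  have "Collect (gi(j := True)) = insert j (Collect gi)" by auto
  then show ?thesis unfolding spill_def using assms by (simp add: add.commute)
qed

lemma feasible_add_link:
  assumes "feasible p w k i xi yi gi" and "\<not> gi j" and "i \<noteq> j" and "k \<le> xi"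
  shows "feasible p w k i (xi - k) yi (gi(j := True))"
  using assms by (auto simp: feasible_def eta_add_link algebra_simps)

lemma nash_eq_best_response:
  assumes "nash_eq U p w k x y g" and "feasible p w k i xi yi gi"
  shows "U i (xi + spill gi x, yi) \<le> U i (x i + spill (g i) x, y i)"
  using assms unfolding nash_eq_def by blast

lemma nash_eq_feasible:
  assumes "nash_eq U p w k x y g"
  shows "feasible p w k i (x i) (y i) (g i)"
  using assms unfolding nash_eq_def by blast

theorem lemma2:
  fixes U :: "'n::finite \<Rightarrow> real \<times> real \<Rightarrow> real"
    and gamma :: "'n \<Rightarrow> real \<Rightarrow> real"
    and p w x y :: "'n \<Rightarrow> real"
    and g :: "'n \<Rightarrow> 'n \<Rightarrow> bool"
    and k :: real
    and i j :: 'n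
  assumes k_pos: "k > 0"
    and w_pos: "\<forall>l. w l > 0"
    and p_pos: "\<forall>l. p l > 0"
    and U_C2: "\<forall>l. twice_cont_diff (U l)"
    and U_conc: "\<forall>l. strictly_concave (U l)"
    and U_incr: "\<forall>l. increasing_both (U l)"
    and engel: "\<forall>l. engel_curve (U l) (p l) (gamma l)"
    and A1: "\<forall>l. assumption1 (gamma l)"
    and NE: "nash_eq U p w k x y g"
    and ij: "i \<noteq> j"
    and xi: "x i > k"
    and xj: "x j > k"
  shows "g i j"
proof (rule ccontr)
  assume no_link: "\<not> g i j"
  let ?gi = "(g i)(j := True)"
  have "feasible p w k i (x i - k) (y i) ?gi"
    using feasible_add_link[OF nash_eq_feasible[OF NE], where j = j, OF no_link ij] xi by simp
  then have "U i (x i - k + spill ?gi x, y i) \<le> U i (x i + spill (g i) x, y i)"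
    by (rule nash_eq_best_response[OF NE])
  moreover have "x i + spill (g i) x < x i - k + spill ?gi x"
    using spill_add_link[where gi = "g i", OF no_link] xj by simp
  then have "U i (x i + spill (g i) x, y i) < U i (x i - k + spill ?gi x, y i)"
    using U_incr unfolding increasing_both_def by blast
  ultimately show False by simp
qed

end
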